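(* There is $n_0$ such that the following holds for every $n\ge n_0$. Let $t\ge1$, let $F$ be an $n$-vertex graph, and suppose there is a partition $V(F)=U\cup V$ with $|U|=\lfloor n/2\rfloor$ and $\left|e_F(U,V)-\frac{e(F)}{2}\right|\ge t$. Let $\gamma\in(0,1)$, let $G$ be a subgraph of $K_n$ (on the vertex set of $K_n$), and suppose there is a partition $V(G)=X\cup Y$ with $|X|=\lfloor n/2\rfloor$ and $\left|e_G(X,Y)-\frac12|X||Y|\right|\ge\gamma n^2$. Suppose that $\gamma t\ge\frac{10e(F)}{n}$. Then there is a copy $F_0$ of $F$ in $K_n$ with $\left||E(F_0)\cap E(G)|-\frac{e(F)}{2}\right|\ge0.5\gamma t$.
   Context: $e_F(U,V)$ denotes the number of edges of $F$ with one endpoint in $U$ and the other in $V$; $e(F)=|E(F)|$. A copy of $F$ in $K_n$ is a subgraph of $K_n$ isomorphic to $F$. *)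

theory Defs
  imports Complex_Main
begin

definition graph_on :: "'a set \<Rightarrow> 'a set set \<Rightarrow> bool" where
  "graph_on V E \<longleftrightarrow> finite V \<and> E \<subseteq> {e. e \<subseteq> V \<and> card e = 2}"

definition e_cross :: "'a set set \<Rightarrow> 'a set \<Rightarrow> 'a set \<Rightarrow> nat" where
  "e_cross E U W = card {e \<in> E. \<exists>u\<in>U. \<exists>w\<in>W. e = {u, w}}"

text \<open>F0 (an edge set on {0..<n}) is a copy of the graph (VF, EF) in K_n:
  the image of F under an injective vertex map into V(K_n) = {0..<n}.\<close>
definition is_copy_in_Kn :: "nat \<Rightarrow> 'a set \<Rightarrow> 'a set set \<Rightarrow> nat set set \<Rightarrow> bool" where
  "is_copy_in_Kn n VF EF F0 \<longleftrightarrow>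
     (\<exists>\<phi>. inj_on \<phi> VF \<and> \<phi> ` VF \<subseteq> {0..<n} \<and> F0 = (\<lambda>e. \<phi> ` e) ` EF)"

end

theory Submission
  imports Defs "HOL-Combinatorics.Permutations"
begin

text \<open>
  Fix a bijection \<sigma> from V(F) onto [n] sending U onto X, and average the overlap
  |\<pi>(\<sigma>(F)) \<inter> G| over the permutations \<pi> of [n] preserving X and Y.  These act
  transitively on the pairs inside X, inside Y and across, so every edge of F inside U (inside
  V, across) becomes a uniformly random pair of the same kind, and the average is an explicit
  bilinear expression in the edge counts of F and G.  Average also with the roles of X and Y
  interchanged, and over all permutations of [n].  With
  \<Delta>_F = e_F(U,V) - e(F)/2 and \<Delta>_G = e_G(X,Y) - |X||Y|/2, the deviation of the mean
  of the two block averages from e(F)/2 differs from 2\<Delta>_F\<Delta>_G/|X|^2 by at most twice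
  the deviation of the full average, up to lower order terms; as |\<Delta>_F\<Delta>_G| \<ge> \<gamma>tn^2,
  one of the averages deviates from e(F)/2 by at least \<gamma>t/2, and then so does one of the
  copies it averages.  For odd n a vertex of Y is set aside, together with a vertex of minimum
  degree of V, whose few edges only enter the error terms.
\<close>

section \<open>Pairs and edge counts\<close>

definition pairs_in :: "'a set \<Rightarrow> 'a set set" where
  "pairs_in D = {f. f \<subseteq> D \<and> card f = 2}"

definition cross_pairs :: "'a set \<Rightarrow> 'a set \<Rightarrow> 'a set set" where
  "cross_pairs A B = {f. \<exists>a\<in>A. \<exists>b\<in>B. f = {a, b}}"

definition e_within :: "'a set set \<Rightarrow> 'a set \<Rightarrow> nat" where
  "e_within E A = card {e \<in> E. e \<subseteq> A}"

definition e_touching :: "'a set set \<Rightarrow> 'a set \<Rightarrow> nat" where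
  "e_touching E W = card {e \<in> E. e \<inter> W \<noteq> {}}"

definition image_edges :: "('a \<Rightarrow> 'b) \<Rightarrow> 'a set set \<Rightarrow> 'b set set" where
  "image_edges \<phi> E = (\<lambda>e. \<phi> ` e) ` E"

lemma graph_on_finite_edges: "graph_on V E \<Longrightarrow> finite E"
  unfolding graph_on_def by (auto intro: finite_subset[of E "Pow V"])

lemma finite_pairs_in: "finite D \<Longrightarrow> finite (pairs_in D)"
  unfolding pairs_in_def by (rule finite_subset[of _ "Pow D"]) auto

lemma real_card_pairs_in:
  assumes "finite D"
  shows "real (card (pairs_in D)) = real (card D) * (real (card D) - 1) / 2"
  using binomial_gbinomial[of "card D" 2] n_subsets[OF assms, of 2]
  by (simp add: pairs_in_def gbinomial_prod_rev numeral_2_eq_2 field_simps)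

lemma cross_pairs_eq_image: "cross_pairs A B = (\<lambda>(a, b). {a, b}) ` (A \<times> B)"
  unfolding cross_pairs_def by auto

lemma cross_pairs_commute: "cross_pairs A B = cross_pairs B A"
  unfolding cross_pairs_def by (auto simp: insert_commute)

lemma finite_cross_pairs: "finite A \<Longrightarrow> finite B \<Longrightarrow> finite (cross_pairs A B)"
  unfolding cross_pairs_eq_image by simp

lemma card_cross_pairs:
  assumes "finite A" "finite B" "A \<inter> B = {}"
  shows "card (cross_pairs A B) = card A * card B"
proof -
  have "inj_on (\<lambda>(a, b). {a, b}) (A \<times> B)"
    using assms(3) by (auto simp: inj_on_def doubleton_eq_iff)
  then show ?thesis
    unfolding cross_pairs_eq_image by (simp add: card_image card_cartesian_product)
qed

lemma card_cross_pairs_le: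
  "finite A \<Longrightarrow> finite B \<Longrightarrow> card (cross_pairs A B) \<le> card A * card B"
  unfolding cross_pairs_eq_image
  using card_image_le[of "A \<times> B" "\<lambda>(a, b). {a, b}"] by (simp add: card_cartesian_product)

lemma e_cross_eq_card_Int: "e_cross E A B = card (E \<inter> cross_pairs A B)"
  unfolding e_cross_def cross_pairs_def by (simp add: Int_def)

lemma e_cross_commute: "e_cross E A B = e_cross E B A"
  unfolding e_cross_eq_card_Int by (simp add: cross_pairs_commute)

lemma e_cross_le:
  assumes "finite A" "finite B"
  shows "e_cross E A B \<le> card A * card B"
  using card_mono[OF finite_cross_pairs[OF assms], of "E \<inter> cross_pairs A B"]
    card_cross_pairs_le[OF assms]
  unfolding e_cross_eq_card_Int by simp

lemma e_cross_le_e_cross_Un: "finite E \<Longrightarrow> e_cross E A B \<le> e_cross E A (B \<union> C)"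
  unfolding e_cross_def by (rule card_mono) auto

lemma e_cross_Un_le: "finite E \<Longrightarrow> e_cross E A (B \<union> C) \<le> e_cross E A B + e_touching E C"
proof -
  assume "finite E"
  have "{e \<in> E. \<exists>u\<in>A. \<exists>w\<in>B \<union> C. e = {u, w}}
      \<subseteq> {e \<in> E. \<exists>u\<in>A. \<exists>w\<in>B. e = {u, w}} \<union> {e \<in> E. e \<inter> C \<noteq> {}}"
    by auto
  then have "e_cross E A (B \<union> C) \<le> card ({e \<in> E. \<exists>u\<in>A. \<exists>w\<in>B. e = {u, w}} \<union> {e \<in> E. e \<inter> C \<noteq> {}})"
    unfolding e_cross_def using \<open>finite E\<close> by (intro card_mono) auto
  also have "\<dots> \<le> e_cross E A B + e_touching E C"
    unfolding e_cross_def e_touching_def by (rule card_Un_le)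
  finally show ?thesis .
qed

lemma e_touching_le:
  assumes "graph_on S E" "R \<subseteq> S"
  shows "e_touching E R \<le> card R * card S"
proof -
  have "finite S" using assms(1) unfolding graph_on_def by simp
  have "{e \<in> E. e \<inter> R \<noteq> {}} \<subseteq> (\<lambda>(r, s). {r, s}) ` (R \<times> S)"
  proof
    fix e assume e: "e \<in> {e \<in> E. e \<inter> R \<noteq> {}}"
    then have "card e = 2" "e \<subseteq> S" using assms(1) unfolding graph_on_def by auto
    then obtain x y where "e = {x, y}" "x \<in> S" "y \<in> S" by (metis card_2_iff insert_subset)
    moreover have "x \<in> R \<or> y \<in> R" using e \<open>e = {x, y}\<close> by auto
    ultimately show "e \<in> (\<lambda>(r, s). {r, s}) ` (R \<times> S)" by (auto simp: insert_commute)
  qed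
  then have "e_touching E R \<le> card ((\<lambda>(r, s). {r, s}) ` (R \<times> S))"
    unfolding e_touching_def using \<open>finite S\<close> assms(2) by (intro card_mono) (auto intro: finite_subset)
  also have "\<dots> \<le> card (R \<times> S)"
    by (rule card_image_le) (use \<open>finite S\<close> assms(2) in \<open>auto intro: finite_subset\<close>)
  finally show ?thesis by (simp add: card_cartesian_product)
qed

lemma pair_in_parts_cases:
  assumes "e \<subseteq> P1 \<union> P2 \<union> P3" "card e = 2"
  shows "e \<subseteq> P1 \<or> e \<subseteq> P2 \<or> e \<in> cross_pairs P1 P2 \<or> e \<inter> P3 \<noteq> {}"
proof -
  obtain x y where e: "e = {x, y}" and "x \<in> P1 \<union> P2 \<union> P3" "y \<in> P1 \<union> P2 \<union> P3"
    using assms by (metis card_2_iff insert_subset)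
  then consider "x \<in> P3 \<or> y \<in> P3" | "x \<in> P1" "y \<in> P1" | "x \<in> P2" "y \<in> P2"
    | "x \<in> P1" "y \<in> P2" | "x \<in> P2" "y \<in> P1"
    by blast
  then show ?thesis
  proof cases
    case 1
    then have "e \<inter> P3 \<noteq> {}" unfolding e by blast
    then show ?thesis by blast
  next
    case 2
    then show ?thesis unfolding e by blast
  next
    case 3
    then show ?thesis unfolding e by blast
  next
    case 4
    then have "e \<in> cross_pairs P1 P2" unfolding e cross_pairs_def by blast
    then show ?thesis by blast
  next
    case 5
    then have "e \<in> cross_pairs P2 P1" unfolding e cross_pairs_def by blast
    then show ?thesis by (simp add: cross_pairs_commute)
  qed
qed

lemma sum_split_edges:
  assumes "finite E" "\<And>e. e \<in> E \<Longrightarrow> e \<subseteq> P1 \<union> P2 \<union> P3 \<and> card e = 2"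
    and "P1 \<inter> P2 = {}" "P1 \<inter> P3 = {}" "P2 \<inter> P3 = {}"
  shows "sum h E = sum h {e \<in> E. e \<subseteq> P1} + sum h {e \<in> E. e \<subseteq> P2}
    + sum h (E \<inter> cross_pairs P1 P2) + sum h {e \<in> E. e \<inter> P3 \<noteq> {}}"
proof -
  define E1 where "E1 = {e \<in> E. e \<subseteq> P1}"
  define E2 where "E2 = {e \<in> E. e \<subseteq> P2}"
  define E3 where "E3 = E \<inter> cross_pairs P1 P2"
  define E4 where "E4 = {e \<in> E. e \<inter> P3 \<noteq> {}}"
  have "E \<subseteq> E1 \<union> E2 \<union> E3 \<union> E4"
  proof
    fix e assume "e \<in> E"
    then have "e \<subseteq> P1 \<or> e \<subseteq> P2 \<or> e \<in> cross_pairs P1 P2 \<or> e \<inter> P3 \<noteq> {}"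
      using assms(2) by (intro pair_in_parts_cases) auto
    then show "e \<in> E1 \<union> E2 \<union> E3 \<union> E4" using \<open>e \<in> E\<close> unfolding E1_def E2_def E3_def E4_def by blast
  qed
  then have "E = E1 \<union> E2 \<union> E3 \<union> E4" by (auto simp: E1_def E2_def E3_def E4_def)
  moreover have "finite E1" "finite E2" "finite E3" "finite E4"
    using assms(1) by (simp_all add: E1_def E2_def E3_def E4_def)
  moreover have "E1 \<inter> E2 = {}"
  proof -
    have "e \<notin> E2" if "e \<in> E1" for e
    proof
      assume "e \<in> E2"
      then have "e \<subseteq> P1 \<inter> P2" "card e = 2" using that assms(2) unfolding E1_def E2_def by auto
      then show False using assms(3) by simp
    qed
    then show ?thesis by blast
  qed
  moreover have "(E1 \<union> E2) \<inter> E3 = {}"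
    using assms(3) unfolding E1_def E2_def E3_def cross_pairs_def by (auto simp: disjoint_iff)
  moreover have "(E1 \<union> E2 \<union> E3) \<inter> E4 = {}"
    using assms(4,5) unfolding E1_def E2_def E3_def E4_def cross_pairs_def by (auto simp: disjoint_iff)
  ultimately show ?thesis
    unfolding E1_def[symmetric] E2_def[symmetric] E3_def[symmetric] E4_def[symmetric]
    by (simp add: sum.union_disjoint)
qed

lemma card_split_edges:
  assumes "finite E" "\<And>e. e \<in> E \<Longrightarrow> e \<subseteq> P1 \<union> P2 \<union> P3 \<and> card e = 2"
    and "P1 \<inter> P2 = {}" "P1 \<inter> P3 = {}" "P2 \<inter> P3 = {}"
  shows "card E = e_within E P1 + e_within E P2 + e_cross E P1 P2 + e_touching E P3"
  using sum_split_edges[OF assms, of "\<lambda>_. 1::nat"]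
  by (simp add: e_within_def e_touching_def e_cross_eq_card_Int)

section \<open>Permutations preserving two blocks\<close>

definition block_perms :: "'a set \<Rightarrow> 'a set \<Rightarrow> 'a set \<Rightarrow> ('a \<Rightarrow> 'a) set" where
  "block_perms S A B = {\<pi>. \<pi> permutes S \<and> \<pi> ` A = A \<and> \<pi> ` B = B}"

lemma block_perms_commute: "block_perms S A B = block_perms S B A"
  unfolding block_perms_def by auto

lemma finite_block_perms: "finite S \<Longrightarrow> finite (block_perms S A B)"
  unfolding block_perms_def by (rule finite_subset[OF _ finite_permutations[of S]]) auto

lemma id_in_block_perms: "id \<in> block_perms S A B"
  unfolding block_perms_def by (auto intro: permutes_id)

lemma block_perms_inj: "\<pi> \<in> block_perms S A B \<Longrightarrow> inj \<pi>"
  unfolding block_perms_def using permutes_inj by auto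

lemma block_perms_comp:
  "\<pi> \<in> block_perms S A B \<Longrightarrow> \<rho> \<in> block_perms S A B \<Longrightarrow> \<pi> \<circ> \<rho> \<in> block_perms S A B"
  unfolding block_perms_def
  by (simp add: permutes_compose image_comp[symmetric] image_image[symmetric])

lemma block_perms_inv:
  assumes "\<pi> \<in> block_perms S A B"
  shows "inv \<pi> \<in> block_perms S A B"
proof -
  have "\<pi> permutes S" "\<pi> ` A = A" "\<pi> ` B = B" using assms unfolding block_perms_def by auto
  moreover from this have "inv \<pi> ` A = A" "inv \<pi> ` B = B"
    by (metis permutes_inj image_inv_f_f)+
  ultimately show ?thesis unfolding block_perms_def by (simp add: permutes_inv)
qed

lemma transpose_in_block_perms:
  assumes "A \<subseteq> S" "A \<inter> B = {}" "x \<in> A" "y \<in> A"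
  shows "transpose x y \<in> block_perms S A B"
proof -
  have "x \<notin> B" "y \<notin> B" using assms by auto
  then show ?thesis using assms unfolding block_perms_def by (auto intro: permutes_swap_id)
qed

lemma bij_betw_comp_right_block_perms:
  assumes "\<tau> \<in> block_perms S A B"
  shows "bij_betw (\<lambda>\<pi>. \<pi> \<circ> \<tau>) (block_perms S A B) (block_perms S A B)"
proof (rule bij_betw_byWitness[where f' = "\<lambda>\<pi>. \<pi> \<circ> inv \<tau>"])
  have "\<tau> permutes S" using assms unfolding block_perms_def by simp
  then have "\<tau> \<circ> inv \<tau> = id" "inv \<tau> \<circ> \<tau> = id" by (simp_all add: permutes_inv_o)
  then show "\<forall>\<pi>\<in>block_perms S A B. \<pi> \<circ> \<tau> \<circ> inv \<tau> = \<pi>"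
    and "\<forall>\<pi>\<in>block_perms S A B. \<pi> \<circ> inv \<tau> \<circ> \<tau> = \<pi>"
    by (simp_all add: comp_assoc)
qed (use assms block_perms_comp block_perms_inv in blast)+

lemma bij_betw_image_pairs_in:
  assumes "inj \<pi>" "\<pi> ` D = D" "finite D"
  shows "bij_betw (image \<pi>) (pairs_in D) (pairs_in D)"
proof -
  have inj: "inj_on (image \<pi>) (pairs_in D)"
    using assms(1) by (meson inj_image_eq_iff inj_onI)
  have "image \<pi> ` pairs_in D \<subseteq> pairs_in D"
    using assms(1,2) by (auto simp: pairs_in_def card_image inj_on_subset)
  then have "image \<pi> ` pairs_in D = pairs_in D"
    using endo_inj_surj[OF finite_pairs_in[OF assms(3)] _ inj] by simp
  then show ?thesis using inj by (simp add: bij_betw_def)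
qed

lemma bij_betw_image_cross_pairs:
  assumes "inj \<pi>" "\<pi> ` A = A" "\<pi> ` B = B" "finite A" "finite B"
  shows "bij_betw (image \<pi>) (cross_pairs A B) (cross_pairs A B)"
proof -
  have inj: "inj_on (image \<pi>) (cross_pairs A B)"
    using assms(1) by (meson inj_image_eq_iff inj_onI)
  have "image \<pi> ` cross_pairs A B \<subseteq> cross_pairs A B"
  proof
    fix f assume "f \<in> image \<pi> ` cross_pairs A B"
    then obtain a b where "a \<in> A" "b \<in> B" "f = {\<pi> a, \<pi> b}"
      unfolding cross_pairs_def by auto
    moreover have "\<pi> a \<in> A" "\<pi> b \<in> B" using assms(2,3) calculation(1,2) by auto
    ultimately show "f \<in> cross_pairs A B" unfolding cross_pairs_def by auto
  qed
  then have "image \<pi> ` cross_pairs A B = cross_pairs A B"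
    using endo_inj_surj[OF finite_cross_pairs[OF assms(4,5)] _ inj] by simp
  then show ?thesis using inj by (simp add: bij_betw_def)
qed

lemma block_perms_transitive_pairs_in:
  assumes "A \<subseteq> S" "A \<inter> B = {}" "f \<in> pairs_in A" "f' \<in> pairs_in A"
  shows "\<exists>\<tau>\<in>block_perms S A B. \<tau> ` f = f'"
proof -
  obtain a1 a2 where a: "f = {a1, a2}" "a1 \<noteq> a2"
    using assms(3) unfolding pairs_in_def by (auto simp: card_2_iff)
  obtain b1 b2 where b: "f' = {b1, b2}" "b1 \<noteq> b2"
    using assms(4) unfolding pairs_in_def by (auto simp: card_2_iff)
  have in_A: "a1 \<in> A" "a2 \<in> A" "b1 \<in> A" "b2 \<in> A"
    using a b assms(3,4) unfolding pairs_in_def by auto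
  \<comment> \<open>the first transposition moves a1 to b1 and a2 to some c \<noteq> b1, the second moves c to b2\<close>
  define c where "c = transpose a1 b1 a2"
  define \<tau> where "\<tau> = transpose c b2 \<circ> transpose a1 b1"
  have "c \<in> A" "c \<noteq> b1" using in_A a(2) by (auto simp: c_def transpose_def)
  then have "\<tau> \<in> block_perms S A B"
    unfolding \<tau>_def using in_A assms(1,2) by (intro block_perms_comp transpose_in_block_perms)
  moreover have "\<tau> a1 = b1" "\<tau> a2 = b2"
    using \<open>c \<noteq> b1\<close> b(2) by (simp_all add: \<tau>_def c_def)
  ultimately show ?thesis using a b by (intro bexI[of _ \<tau>]) auto
qed

lemma block_perms_transitive_cross_pairs:
  assumes "A \<subseteq> S" "B \<subseteq> S" "A \<inter> B = {}" "f \<in> cross_pairs A B" "f' \<in> cross_pairs A B"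
  shows "\<exists>\<tau>\<in>block_perms S A B. \<tau> ` f = f'"
proof -
  obtain a b where ab: "a \<in> A" "b \<in> B" "f = {a, b}"
    using assms(4) unfolding cross_pairs_def by auto
  obtain a' b' where ab': "a' \<in> A" "b' \<in> B" "f' = {a', b'}"
    using assms(5) unfolding cross_pairs_def by auto
  define \<tau> where "\<tau> = transpose a a' \<circ> transpose b b'"
  have "transpose a a' \<in> block_perms S A B"
    using ab ab' assms(1,3) by (intro transpose_in_block_perms)
  moreover have "transpose b b' \<in> block_perms S A B"
    using ab ab' assms(2,3) transpose_in_block_perms[of B S A b b'] block_perms_commute[of S A B]
    by auto
  ultimately have "\<tau> \<in> block_perms S A B" unfolding \<tau>_def by (rule block_perms_comp)
  moreover have "a \<noteq> b" "a \<noteq> b'" "b' \<noteq> a" "b' \<noteq> a'" using ab ab' assms(3) by auto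
  then have "\<tau> ` f = f'" by (simp add: \<tau>_def ab ab')
  ultimately show ?thesis by blast
qed

lemma card_hits_transitive_action:
  assumes "finite P" "finite T"
    and right_mult: "\<And>\<tau>. \<tau> \<in> P \<Longrightarrow> bij_betw (\<lambda>\<pi>. \<pi> \<circ> \<tau>) P P"
    and acts: "\<And>\<pi>. \<pi> \<in> P \<Longrightarrow> bij_betw (image \<pi>) T T"
    and transitive: "\<And>f f'. f \<in> T \<Longrightarrow> f' \<in> T \<Longrightarrow> \<exists>\<tau>\<in>P. \<tau> ` f = f'"
    and "f \<in> T"
  shows "card T * card {\<pi> \<in> P. \<pi> ` f \<in> G} = card P * card (G \<inter> T)"
proof -
  have same_hits: "card {\<pi> \<in> P. \<pi> ` f' \<in> G} = card {\<pi> \<in> P. \<pi> ` f \<in> G}" if f': "f' \<in> T" for f'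
  proof -
    obtain \<tau> where "\<tau> \<in> P" "\<tau> ` f = f'" using transitive[OF \<open>f \<in> T\<close> f'] by blast
    then have "bij_betw (\<lambda>\<pi>. \<pi> \<circ> \<tau>) {\<pi> \<in> P. \<pi> ` f' \<in> G} {\<pi> \<in> P. \<pi> ` f \<in> G}"
      by (intro bij_betw_Collect[OF right_mult]) (auto simp: image_comp)
    then show ?thesis by (rule bij_betw_same_card)
  qed
  have "card T * card {\<pi> \<in> P. \<pi> ` f \<in> G} = (\<Sum>f'\<in>T. card {\<pi> \<in> P. \<pi> ` f' \<in> G})"
    using same_hits by simp
  also have "\<dots> = (\<Sum>\<pi>\<in>P. card {f' \<in> T. \<pi> ` f' \<in> G})"
    using sum.swap_restrict[OF assms(2,1), of "\<lambda>_ _. 1" "\<lambda>f' \<pi>. \<pi> ` f' \<in> G"] by (simp only: card_eq_sum)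
  also have "\<dots> = (\<Sum>\<pi>\<in>P. card (G \<inter> T))"
  proof (rule sum.cong[OF refl])
    fix \<pi> assume "\<pi> \<in> P"
    have "bij_betw (image \<pi>) {f' \<in> T. \<pi> ` f' \<in> G} {f' \<in> T. f' \<in> G}"
      by (rule bij_betw_Collect[OF acts[OF \<open>\<pi> \<in> P\<close>]]) simp
    then show "card {f' \<in> T. \<pi> ` f' \<in> G} = card (G \<inter> T)"
      by (simp add: bij_betw_same_card Int_def conj_commute)
  qed
  finally show ?thesis by simp
qed

lemma block_perms_hit_ratio_pairs_in:
  assumes "finite S" "A \<subseteq> S" "A \<inter> B = {}" "f \<in> pairs_in A"
  shows "real (card {\<pi> \<in> block_perms S A B. \<pi> ` f \<in> G}) / real (card (block_perms S A B))
    = real (card (G \<inter> pairs_in A)) / real (card (pairs_in A))"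
proof -
  have "finite A" using assms(1,2) by (rule finite_subset[rotated])
  have "card (pairs_in A) * card {\<pi> \<in> block_perms S A B. \<pi> ` f \<in> G}
      = card (block_perms S A B) * card (G \<inter> pairs_in A)"
  proof (rule card_hits_transitive_action[OF finite_block_perms[OF assms(1)] finite_pairs_in[OF \<open>finite A\<close>]
        bij_betw_comp_right_block_perms _ _ assms(4)])
    show "bij_betw (image \<pi>) (pairs_in A) (pairs_in A)" if "\<pi> \<in> block_perms S A B" for \<pi>
      using that \<open>finite A\<close> block_perms_inj[OF that]
      by (intro bij_betw_image_pairs_in) (auto simp: block_perms_def)
  next
    show "\<exists>\<tau>\<in>block_perms S A B. \<tau> ` f' = f''" if "f' \<in> pairs_in A" "f'' \<in> pairs_in A" for f' f''
      using assms(2,3) that by (rule block_perms_transitive_pairs_in)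
  qed
  moreover have "card (pairs_in A) > 0"
    using assms(4) finite_pairs_in[OF \<open>finite A\<close>] card_gt_0_iff by blast
  moreover have "card (block_perms S A B) > 0"
    using finite_block_perms[OF assms(1)] id_in_block_perms card_gt_0_iff by blast
  ultimately show ?thesis by (simp add: field_simps flip: of_nat_mult)
qed

lemma block_perms_hit_ratio_cross_pairs:
  assumes "finite S" "A \<subseteq> S" "B \<subseteq> S" "A \<inter> B = {}" "f \<in> cross_pairs A B"
  shows "real (card {\<pi> \<in> block_perms S A B. \<pi> ` f \<in> G}) / real (card (block_perms S A B))
    = real (card (G \<inter> cross_pairs A B)) / (real (card A) * real (card B))"
proof -
  have "finite A" "finite B" using assms(1-3) finite_subset by auto
  have "card (cross_pairs A B) * card {\<pi> \<in> block_perms S A B. \<pi> ` f \<in> G}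
      = card (block_perms S A B) * card (G \<inter> cross_pairs A B)"
  proof (rule card_hits_transitive_action[OF finite_block_perms[OF assms(1)]
        finite_cross_pairs[OF \<open>finite A\<close> \<open>finite B\<close>] bij_betw_comp_right_block_perms _ _ assms(5)])
    show "bij_betw (image \<pi>) (cross_pairs A B) (cross_pairs A B)" if "\<pi> \<in> block_perms S A B" for \<pi>
      using that \<open>finite A\<close> \<open>finite B\<close> block_perms_inj[OF that]
      by (intro bij_betw_image_cross_pairs) (auto simp: block_perms_def)
  next
    show "\<exists>\<tau>\<in>block_perms S A B. \<tau> ` f' = f''"
      if "f' \<in> cross_pairs A B" "f'' \<in> cross_pairs A B" for f' f''
      using assms(2-4) that by (rule block_perms_transitive_cross_pairs)
  qed
  moreover have "card (cross_pairs A B) > 0"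
    using assms(5) finite_cross_pairs[OF \<open>finite A\<close> \<open>finite B\<close>] card_gt_0_iff by blast
  moreover have "card (block_perms S A B) > 0"
    using finite_block_perms[OF assms(1)] id_in_block_perms card_gt_0_iff by blast
  ultimately show ?thesis
    using card_cross_pairs[OF \<open>finite A\<close> \<open>finite B\<close> assms(4)]
    by (simp add: field_simps flip: of_nat_mult)
qed

section \<open>Average overlap of the copies\<close>

definition mean_overlap ::
    "'b set \<Rightarrow> 'b set \<Rightarrow> 'b set \<Rightarrow> ('a \<Rightarrow> 'b) \<Rightarrow> 'a set set \<Rightarrow> 'b set set \<Rightarrow> real" where
  "mean_overlap S A B \<sigma> EF EG =
    (\<Sum>\<pi>\<in>block_perms S A B. real (card (image_edges (\<pi> \<circ> \<sigma>) EF \<inter> EG))) / real (card (block_perms S A B))"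

lemma sum_card_image_edges_Int:
  assumes "finite P" "\<And>\<pi>. \<pi> \<in> P \<Longrightarrow> inj \<pi>" "inj_on \<sigma> VF" "graph_on VF EF"
  shows "(\<Sum>\<pi>\<in>P. card (image_edges (\<pi> \<circ> \<sigma>) EF \<inter> G)) = (\<Sum>e\<in>EF. card {\<pi> \<in> P. \<pi> ` \<sigma> ` e \<in> G})"
proof -
  have "card (image_edges (\<pi> \<circ> \<sigma>) EF \<inter> G) = card {e \<in> EF. \<pi> ` \<sigma> ` e \<in> G}" if "\<pi> \<in> P" for \<pi>
  proof -
    have "inj_on (\<pi> \<circ> \<sigma>) VF"
      by (rule comp_inj_on[OF assms(3) inj_on_subset[OF assms(2)[OF that]]]) simp
    then have "inj_on (image (\<pi> \<circ> \<sigma>)) EF"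
      using assms(4) unfolding graph_on_def by (blast intro: inj_on_subset[OF inj_on_image_Pow])
    then have inj: "inj_on (image (\<pi> \<circ> \<sigma>)) {e \<in> EF. \<pi> ` \<sigma> ` e \<in> G}"
      by (rule inj_on_subset) auto
    have "image_edges (\<pi> \<circ> \<sigma>) EF \<inter> G = image (\<pi> \<circ> \<sigma>) ` {e \<in> EF. \<pi> ` \<sigma> ` e \<in> G}"
      unfolding image_edges_def by (auto simp: image_comp)
    then show ?thesis using card_image[OF inj] by (simp only:)
  qed
  then have "(\<Sum>\<pi>\<in>P. card (image_edges (\<pi> \<circ> \<sigma>) EF \<inter> G)) = (\<Sum>\<pi>\<in>P. card {e \<in> EF. \<pi> ` \<sigma> ` e \<in> G})"
    by simp
  also have "\<dots> = (\<Sum>e\<in>EF. card {\<pi> \<in> P. \<pi> ` \<sigma> ` e \<in> G})"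
    using sum.swap_restrict[OF assms(1) graph_on_finite_edges[OF assms(4)], of "\<lambda>_ _. 1"
        "\<lambda>\<pi> e. \<pi> ` \<sigma> ` e \<in> G"]
    by (simp only: card_eq_sum)
  finally show ?thesis .
qed

lemma block_perms_hit_ratio_image_edge:
  assumes "finite S" "A \<subseteq> S" "B \<subseteq> S" "A \<inter> B = {}" "graph_on S EG"
    and "inj_on \<sigma> (U \<union> V)" "\<sigma> ` U = A" "\<sigma> ` V = B"
  shows "e \<subseteq> U \<Longrightarrow> card e = 2 \<Longrightarrow> real (card {\<pi> \<in> block_perms S A B. \<pi> ` \<sigma> ` e \<in> EG})
      / real (card (block_perms S A B)) = real (e_within EG A) / real (card (pairs_in A))"
    and "e \<subseteq> V \<Longrightarrow> card e = 2 \<Longrightarrow> real (card {\<pi> \<in> block_perms S A B. \<pi> ` \<sigma> ` e \<in> EG})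
      / real (card (block_perms S A B)) = real (e_within EG B) / real (card (pairs_in B))"
    and "e \<in> cross_pairs U V \<Longrightarrow> real (card {\<pi> \<in> block_perms S A B. \<pi> ` \<sigma> ` e \<in> EG})
      / real (card (block_perms S A B)) = real (e_cross EG A B) / (real (card A) * real (card B))"
proof -
  have EG: "EG \<inter> pairs_in D = {g \<in> EG. g \<subseteq> D}" for D
    using assms(5) unfolding graph_on_def pairs_in_def by auto
  have card_image_edge: "card (\<sigma> ` e) = 2" if "e \<subseteq> U \<union> V" "card e = 2"
    using that card_image[OF inj_on_subset[OF assms(6)]] by metis
  show "real (card {\<pi> \<in> block_perms S A B. \<pi> ` \<sigma> ` e \<in> EG}) / real (card (block_perms S A B))
      = real (e_within EG A) / real (card (pairs_in A))" if "e \<subseteq> U" "card e = 2"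
  proof -
    have "\<sigma> ` e \<in> pairs_in A" using that card_image_edge assms(7) unfolding pairs_in_def by blast
    then show ?thesis
      unfolding e_within_def EG[symmetric] by (rule block_perms_hit_ratio_pairs_in[OF assms(1,2,4)])
  qed
  show "real (card {\<pi> \<in> block_perms S A B. \<pi> ` \<sigma> ` e \<in> EG}) / real (card (block_perms S A B))
      = real (e_within EG B) / real (card (pairs_in B))" if "e \<subseteq> V" "card e = 2"
  proof -
    have "\<sigma> ` e \<in> pairs_in B" using that card_image_edge assms(8) unfolding pairs_in_def by blast
    then show ?thesis
      unfolding e_within_def EG[symmetric] block_perms_commute[of S A B]
      using assms(1,3,4) by (intro block_perms_hit_ratio_pairs_in) auto
  qed
  show "real (card {\<pi> \<in> block_perms S A B. \<pi> ` \<sigma> ` e \<in> EG}) / real (card (block_perms S A B))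
      = real (e_cross EG A B) / (real (card A) * real (card B))" if "e \<in> cross_pairs U V"
  proof -
    have "\<sigma> ` e \<in> cross_pairs A B" using that assms(7,8) unfolding cross_pairs_def by auto
    then show ?thesis
      unfolding e_cross_eq_card_Int by (rule block_perms_hit_ratio_cross_pairs[OF assms(1-4)])
  qed
qed

lemma mean_overlap_block_perms:
  assumes "finite S" "A \<subseteq> S" "B \<subseteq> S" "A \<inter> B = {}" "graph_on S EG"
    and "graph_on VF EF" "VF = U \<union> V \<union> W" "U \<inter> V = {}" "U \<inter> W = {}" "V \<inter> W = {}"
    and "inj_on \<sigma> VF" "\<sigma> ` U = A" "\<sigma> ` V = B"
  obtains J where "0 \<le> J" "J \<le> real (e_touching EF W)"
    "mean_overlap S A B \<sigma> EF EG
      = real (e_within EF U) * real (e_within EG A) / real (card (pairs_in A))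
      + real (e_within EF V) * real (e_within EG B) / real (card (pairs_in B))
      + real (e_cross EF U V) * real (e_cross EG A B) / (real (card A) * real (card B)) + J"
proof -
  let ?P = "block_perms S A B"
  define hits where "hits e = real (card {\<pi> \<in> ?P. \<pi> ` \<sigma> ` e \<in> EG}) / real (card ?P)" for e
  have EF: "finite EF" "\<And>e. e \<in> EF \<Longrightarrow> e \<subseteq> U \<union> V \<union> W \<and> card e = 2"
    using graph_on_finite_edges[OF assms(6)] assms(6,7) unfolding graph_on_def by auto
  have "inj_on \<sigma> (U \<union> V)" using assms(7,11) by (auto intro: inj_on_subset)
  note hits_edge = block_perms_hit_ratio_image_edge[OF assms(1-5) this assms(12,13), folded hits_def]
  have sum_const: "sum hits E' = real (card E') * c" if "\<And>e. e \<in> E' \<Longrightarrow> hits e = c" for E' c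
    using sum.cong[OF refl that, of E'] by simp
  have "mean_overlap S A B \<sigma> EF EG = real (\<Sum>e\<in>EF. card {\<pi> \<in> ?P. \<pi> ` \<sigma> ` e \<in> EG}) / real (card ?P)"
    unfolding mean_overlap_def of_nat_sum[symmetric]
    using sum_card_image_edges_Int[OF finite_block_perms[OF assms(1)] block_perms_inj assms(11,6)]
    by (simp only:)
  also have "\<dots> = sum hits EF" unfolding hits_def by (simp add: sum_divide_distrib)
  also have "\<dots> = sum hits {e \<in> EF. e \<subseteq> U} + sum hits {e \<in> EF. e \<subseteq> V}
      + sum hits (EF \<inter> cross_pairs U V) + sum hits {e \<in> EF. e \<inter> W \<noteq> {}}"
    using EF assms(8-10) by (rule sum_split_edges)
  also have "sum hits {e \<in> EF. e \<subseteq> U} = real (e_within EF U) * (real (e_within EG A) / real (card (pairs_in A)))"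
    unfolding e_within_def[of EF U] using EF(2) hits_edge(1) by (intro sum_const) auto
  also have "sum hits {e \<in> EF. e \<subseteq> V} = real (e_within EF V) * (real (e_within EG B) / real (card (pairs_in B)))"
    unfolding e_within_def[of EF V] using EF(2) hits_edge(2) by (intro sum_const) auto
  also have "sum hits (EF \<inter> cross_pairs U V)
      = real (e_cross EF U V) * (real (e_cross EG A B) / (real (card A) * real (card B)))"
    unfolding e_cross_eq_card_Int[of EF U V] using hits_edge(3) by (intro sum_const) auto
  finally have "mean_overlap S A B \<sigma> EF EG
      = real (e_within EF U) * real (e_within EG A) / real (card (pairs_in A))
      + real (e_within EF V) * real (e_within EG B) / real (card (pairs_in B))
      + real (e_cross EF U V) * real (e_cross EG A B) / (real (card A) * real (card B))
      + sum hits {e \<in> EF. e \<inter> W \<noteq> {}}" by simp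
  moreover have "0 \<le> sum hits {e \<in> EF. e \<inter> W \<noteq> {}}" by (simp add: hits_def sum_nonneg)
  moreover have "sum hits {e \<in> EF. e \<inter> W \<noteq> {}} \<le> e_touching EF W"
  proof -
    have "hits e \<le> 1" for e
      unfolding hits_def using finite_block_perms[OF assms(1)] by (simp add: card_mono divide_le_eq_1 card_gt_0_iff)
    then show ?thesis using sum_mono[of _ hits "\<lambda>_. 1"] by (simp add: e_touching_def)
  qed
  ultimately show ?thesis using that by blast
qed

lemma mean_overlap_all_perms:
  fixes S :: "'b set" and \<sigma> :: "'a \<Rightarrow> 'b"
  assumes "finite S" "graph_on S EG" "graph_on VF EF" "inj_on \<sigma> VF" "\<sigma> ` VF = S"
  shows "mean_overlap S S {} \<sigma> EF EG = real (card EF) * real (card EG) / real (card (pairs_in S))"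
proof -
  have "VF = VF \<union> {} \<union> {}" by simp
  from mean_overlap_block_perms[OF assms(1) order_refl empty_subsetI Int_empty_right assms(2,3) this
      Int_empty_right Int_empty_right Int_empty_left assms(4,5) image_empty]
  obtain J where "0 \<le> J" "J \<le> real (e_touching EF {})" and
    "mean_overlap S S {} \<sigma> EF EG
      = real (e_within EF VF) * real (e_within EG S) / real (card (pairs_in S))
      + real (e_within EF {}) * real (e_within EG {}) / real (card (pairs_in ({} :: 'b set)))
      + real (e_cross EF VF {}) * real (e_cross EG S {}) / (real (card S) * real (card ({} :: 'b set)))
      + J" .
  moreover have "J = 0" using calculation(1,2) by (simp add: e_touching_def)
  moreover have "{e \<in> EF. e \<subseteq> VF} = EF" "{e \<in> EG. e \<subseteq> S} = EG" "{e \<in> EF. e \<subseteq> {}} = {}"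
    using assms(2,3) unfolding graph_on_def by fastforce+
  ultimately show ?thesis by (simp add: e_within_def)
qed

lemma exists_ge_of_mean_deviation:
  fixes v :: "'a \<Rightarrow> real"
  assumes "finite P" "P \<noteq> {}" "d \<le> \<bar>(\<Sum>\<pi>\<in>P. v \<pi>) / card P - c\<bar>"
  shows "\<exists>\<pi>\<in>P. d \<le> \<bar>v \<pi> - c\<bar>"
proof (rule ccontr)
  assume "\<not> ?thesis"
  then have less: "\<bar>v \<pi> - c\<bar> < d" if "\<pi> \<in> P" for \<pi> using that by auto
  have "0 < real (card P)" using assms(1,2) by (simp add: card_gt_0_iff)
  then have "(\<Sum>\<pi>\<in>P. v \<pi>) / card P - c = (\<Sum>\<pi>\<in>P. v \<pi> - c) / card P"
    by (simp add: sum_subtractf field_simps)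
  then have "\<bar>(\<Sum>\<pi>\<in>P. v \<pi>) / card P - c\<bar> \<le> (\<Sum>\<pi>\<in>P. \<bar>v \<pi> - c\<bar>) / card P"
    using \<open>0 < real (card P)\<close> by (simp add: abs_divide divide_right_mono)
  also have "\<dots> < (\<Sum>\<pi>\<in>P. d) / card P"
    using assms(1,2) less \<open>0 < real (card P)\<close> by (intro divide_strict_right_mono sum_strict_mono) auto
  also have "\<dots> = d" using \<open>0 < real (card P)\<close> by simp
  finally show False using assms(3) by simp
qed

lemma is_copy_in_Kn_image_edges:
  assumes "\<pi> permutes {0..<n}" "inj_on \<sigma> VF" "\<sigma> ` VF = {0..<n}"
  shows "is_copy_in_Kn n VF EF (image_edges (\<pi> \<circ> \<sigma>) EF)"
proof -
  have "inj_on (\<pi> \<circ> \<sigma>) VF"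
    by (rule comp_inj_on[OF assms(2) inj_on_subset[OF permutes_inj[OF assms(1)]]]) simp
  moreover have "(\<pi> \<circ> \<sigma>) ` VF = {0..<n}"
    using assms(3) permutes_image[OF assms(1)] by (simp only: image_comp[symmetric])
  ultimately show ?thesis unfolding is_copy_in_Kn_def image_edges_def by blast
qed

lemma exists_copy_of_mean_deviation:
  assumes "inj_on \<sigma> VF" "\<sigma> ` VF = {0..<n}" "d \<le> \<bar>mean_overlap {0..<n} A B \<sigma> EF EG - c\<bar>"
  shows "\<exists>F0. is_copy_in_Kn n VF EF F0 \<and> d \<le> \<bar>real (card (F0 \<inter> EG)) - c\<bar>"
proof -
  obtain \<pi> where "\<pi> \<in> block_perms {0..<n} A B" "d \<le> \<bar>real (card (image_edges (\<pi> \<circ> \<sigma>) EF \<inter> EG)) - c\<bar>"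
    using exists_ge_of_mean_deviation[OF finite_block_perms _ assms(3)[unfolded mean_overlap_def]]
      id_in_block_perms by blast
  moreover from this have "\<pi> permutes {0..<n}" by (simp add: block_perms_def)
  ultimately show ?thesis using is_copy_in_Kn_image_edges assms(1,2) by blast
qed

text \<open>
  The variables stand for the following counts: m = |X| = \<lfloor>n/2\<rfloor>; e = e(F), of which ins lie
  inside U or inside V - W, a go across and jF meet W; eG = e(G), of which gin lie inside X or
  inside B, gAB go across, gXY = e_G(X,Y), and jG meet R; JB and JC are the contributions of the
  edges meeting W to the two block means.
\<close>

lemma trimmed_cross_excess_lower_bound:
  fixes n m t e ins a jF :: real
  assumes "1000 \<le> n" "n \<le> 2*m + 1" "0 < t"
    and "e = ins + a + jF" "0 \<le> ins" "0 \<le> a" "0 \<le> jF" "jF*m \<le> 2*e" "e \<le> n*t/80"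
    and "t - jF \<le> \<bar>a - e/2\<bar>"
  shows "0.8*n*t \<le> \<bar>a*(m - 1) - ins*m\<bar>"
proof -
  have "0 < 2*m - 1" using assms(1,2) by simp
  have "a*(m - 1) - ins*m = (2*m - 1)*(a - e/2) - e/2 + jF*m"
    using assms(4) by (simp add: field_simps)
  moreover have "(2*m - 1)*(t - jF) \<le> \<bar>(2*m - 1)*(a - e/2)\<bar>"
    using \<open>0 < 2*m - 1\<close> assms(10) by (simp add: abs_mult)
  moreover have "(2*m - 1)*(t - jF) = (2*m - 1)*t - 2*(jF*m) + jF" by (simp add: algebra_simps)
  moreover have "(n - 2)*t \<le> (2*m - 1)*t" using assms(2,3) by (intro mult_right_mono) auto
  moreover have "0 \<le> jF*m" using \<open>0 < 2*m - 1\<close> assms(7) by simp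
  ultimately have "n*t - 2*t - 6.5*e \<le> \<bar>a*(m - 1) - ins*m\<bar>"
    using assms(7,8) by (simp add: left_diff_distrib)
  moreover have "1000*t \<le> n*t" using assms(1,3) by (intro mult_right_mono) auto
  ultimately have "0.8*(n*t) \<le> \<bar>a*(m - 1) - ins*m\<bar>" using assms(9) by linarith
  then show ?thesis by (simp add: mult.assoc)
qed

lemma trimmed_density_excess_lower_bound:
  fixes n m \<gamma> gXY gAB :: real
  assumes "n = 2*m \<or> n = 2*m + 1" "0 \<le> m" "20 \<le> \<gamma>*n"
    and "gAB \<le> gXY" "gXY \<le> gAB + n"
    and "\<gamma>*n^2 \<le> \<bar>gXY - m*(n - m)/2\<bar>"
  shows "0.9*\<gamma>*n^2 \<le> \<bar>gAB - m^2/2\<bar>"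
proof -
  have "\<bar>m*(n - m)/2 - m^2/2\<bar> \<le> n" using assms(1,2) by (auto simp: power2_eq_square field_simps)
  then have "\<gamma>*n^2 - 2*n \<le> \<bar>gAB - m^2/2\<bar>" using assms(4-6) by argo
  moreover have "20*n \<le> (\<gamma>*n)*n" using assms(1-3) by (intro mult_right_mono) auto
  then have "2*n \<le> 0.1*\<gamma>*n^2" by (simp add: power2_eq_square)
  ultimately show ?thesis by simp
qed

lemma cubic_error_terms_le:
  fixes n m N e \<gamma> t :: real
  assumes "0 \<le> m" "m \<le> n/2" "0 \<le> N" "N \<le> n^2/2" "0 \<le> e" "e \<le> \<gamma>*t*n/10" "0 < \<gamma>" "0 < t"
  shows "m^3*(\<gamma>*t)/2 + m^2*e + m*(N*(\<gamma>*t/2) + e*n) \<le> (21/80)*(n^3*(\<gamma>*t))"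
proof -
  have "0 \<le> n" using assms(1,2) by simp
  have "m^3*(\<gamma>*t)/2 \<le> (n/2)^3*(\<gamma>*t)/2"
    using assms by (intro divide_right_mono mult_right_mono power_mono) auto
  moreover have "m^2*e \<le> (n/2)^2*(\<gamma>*t*n/10)"
    using assms by (intro mult_mono power_mono) auto
  moreover have "m*(N*(\<gamma>*t/2) + e*n) \<le> (n/2)*((n^2/2)*(\<gamma>*t/2) + (\<gamma>*t*n/10)*n)"
    using assms \<open>0 \<le> n\<close> by (intro mult_mono add_mono mult_right_mono) auto
  moreover have "(n/2)^3*(\<gamma>*t)/2 + (n/2)^2*(\<gamma>*t*n/10) + (n/2)*((n^2/2)*(\<gamma>*t/2) + (\<gamma>*t*n/10)*n)
      = (21/80)*(n^3*(\<gamma>*t))"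
    by (simp add: power3_eq_cube power2_eq_square field_simps)
  ultimately show ?thesis by linarith
qed

lemma full_mean_term_le:
  fixes n m N e ins eG c \<gamma> t :: real
  assumes "0 \<le> m" "0 < N" "0 \<le> ins" "ins \<le> e" "\<bar>c\<bar> \<le> n" "\<bar>e*eG/N - e/2\<bar> < \<gamma>*t/2"
  shows "\<bar>m*ins*((eG - N/2) + c)\<bar> \<le> m*(N*(\<gamma>*t/2) + e*n)"
proof -
  have "0 \<le> e" using assms(3,4) by simp
  have "e*eG/N - e/2 = e*(eG - N/2)/N" using assms(2) by (simp add: field_simps)
  then have "e*\<bar>eG - N/2\<bar> = N*\<bar>e*eG/N - e/2\<bar>"
    using assms(2) \<open>0 \<le> e\<close> by (simp add: abs_mult abs_divide)
  also have "\<dots> \<le> N*(\<gamma>*t/2)" using assms(2,6) by simp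
  finally have "ins*\<bar>eG - N/2\<bar> \<le> N*(\<gamma>*t/2)"
    using mult_right_mono[OF assms(4) abs_ge_zero] by (rule order_trans[rotated])
  moreover have "ins*\<bar>c\<bar> \<le> e*n" using assms(3-5) by (intro mult_mono) auto
  moreover have "ins*\<bar>(eG - N/2) + c\<bar> \<le> ins*\<bar>eG - N/2\<bar> + ins*\<bar>c\<bar>"
    using mult_left_mono[OF abs_triangle_ineq assms(3)] by (simp add: distrib_left)
  ultimately have "m*(ins*\<bar>(eG - N/2) + c\<bar>) \<le> m*(N*(\<gamma>*t/2) + e*n)"
    using assms(1) by (intro mult_left_mono) auto
  moreover have "\<bar>m*ins*((eG - N/2) + c)\<bar> = m*(ins*\<bar>(eG - N/2) + c\<bar>)"
    using assms(1,3) by (simp add: abs_mult)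
  ultimately show ?thesis by simp
qed

lemma excess_product_upper_bound:
  fixes n m N e ins a jF \<gamma> t gin gAB jG eG JB JC :: real
  assumes n: "1000 \<le> n" "n = 2*m \<or> n = 2*m + 1" and N: "N = n*(n - 1)/2"
    and F: "e = ins + a + jF" "0 \<le> ins" "0 \<le> a" "0 \<le> jF" "jF*m \<le> 2*e"
    and \<gamma>t: "0 < \<gamma>" "0 < t" "e \<le> \<gamma>*t*n/10"
    and G: "eG = gin + gAB + jG" "0 \<le> jG" "jG \<le> n"
    and J: "0 \<le> JB" "JB \<le> jF" "0 \<le> JC" "JC \<le> jF"
    and mean_all: "\<bar>e*eG/N - e/2\<bar> < \<gamma>*t/2"
    and mean_blocks: "\<bar>ins*gin/(m*(m - 1)) + a*gAB/m^2 + (JB + JC)/2 - e/2\<bar> < \<gamma>*t/2"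
  shows "\<bar>(gAB - m^2/2) * (a*(m - 1) - ins*m)\<bar> \<le> (21/80)*(n^3*(\<gamma>*t))"
proof -
  have m: "499 \<le> m" using n by auto
  have "0 < N" "N \<le> n^2/2" "0 \<le> e" "ins \<le> e" using F n N by (auto simp: power2_eq_square)
  define B where "B = ins*gin/(m*(m - 1)) + a*gAB/m^2 - (ins + a)/2"
  define c where "c = N/2 - m*(m - 1)/2 - m^2/2 - jG"
  have "\<bar>B\<bar> < \<gamma>*t/2 + jF/2"
    using mean_blocks J F(1) unfolding B_def by argo
  \<comment> \<open>the deviation of the block means splits into a multiple of the deviation of the full
    mean and the product of the two excesses\<close>
  have "m^2*(m - 1)*B = m*ins*((eG - N/2) + c) + (gAB - m^2/2)*(a*(m - 1) - ins*m)"
    using m unfolding B_def c_def G(1) by (simp add: field_simps power2_eq_square)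
  then have "(gAB - m^2/2)*(a*(m - 1) - ins*m) = m^2*(m - 1)*B - m*ins*((eG - N/2) + c)" by simp
  then have "\<bar>(gAB - m^2/2)*(a*(m - 1) - ins*m)\<bar> \<le> \<bar>m^2*(m - 1)*B\<bar> + \<bar>m*ins*((eG - N/2) + c)\<bar>"
    by (simp only: abs_triangle_ineq4)
  moreover have "\<bar>m^2*(m - 1)*B\<bar> \<le> m^3*(\<gamma>*t)/2 + m^2*e"
  proof -
    have "\<bar>m^2*(m - 1)*B\<bar> = m^2*(m - 1)*\<bar>B\<bar>" using m by (simp add: abs_mult)
    also have "\<dots> \<le> m^2*(m - 1)*(\<gamma>*t/2 + jF/2)"
      using \<open>\<bar>B\<bar> < \<gamma>*t/2 + jF/2\<close> m by (intro mult_left_mono) auto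
    finally have "\<bar>m^2*(m - 1)*B\<bar> \<le> m^2*(m - 1)*(\<gamma>*t/2 + jF/2)" .
    moreover have "m^2*(m - 1)*(\<gamma>*t) \<le> m^3*(\<gamma>*t)"
      using \<gamma>t by (intro mult_right_mono) (auto simp: power2_eq_square power3_eq_cube algebra_simps)
    moreover have "m^2*(m - 1)*jF \<le> m^2*(jF*m)" using m F(4) by (simp add: mult_left_mono algebra_simps)
    moreover have "m^2*(jF*m) \<le> m^2*(2*e)" using F(5) by (simp add: mult_left_mono)
    ultimately show ?thesis by (simp add: distrib_left)
  qed
  moreover have "\<bar>m*ins*((eG - N/2) + c)\<bar> \<le> m*(N*(\<gamma>*t/2) + e*n)"
  proof (rule full_mean_term_le)
    have "N/2 - m*(m - 1)/2 - m^2/2 = (n - 2*m)*m"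
      using n unfolding N by (auto simp: power2_eq_square field_simps)
    then show "\<bar>c\<bar> \<le> n" using n m G(2,3) unfolding c_def by auto
  qed (use m F(2) \<open>0 < N\<close> \<open>ins \<le> e\<close> mean_all in auto)
  moreover have "m^3*(\<gamma>*t)/2 + m^2*e + m*(N*(\<gamma>*t/2) + e*n) \<le> (21/80)*(n^3*(\<gamma>*t))"
    using m n \<gamma>t \<open>0 < N\<close> \<open>N \<le> n^2/2\<close> \<open>0 \<le> e\<close> by (intro cubic_error_terms_le) auto
  ultimately show ?thesis by linarith
qed

lemma full_or_block_mean_deviates:
  fixes n m N e ins a jF \<gamma> t gin gAB jG eG JB JC :: real
  assumes n: "1000 \<le> n" "n = 2*m \<or> n = 2*m + 1" and N: "N = n*(n - 1)/2"
    and F: "e = ins + a + jF" "0 \<le> ins" "0 \<le> a" "0 \<le> jF" "jF*m \<le> 2*e"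
    and \<gamma>t: "0 < \<gamma>" "0 < t" "e \<le> \<gamma>*t*n/10"
    and G: "eG = gin + gAB + jG" "0 \<le> jG" "jG \<le> n"
    and J: "0 \<le> JB" "JB \<le> jF" "0 \<le> JC" "JC \<le> jF"
    and sep_F: "0.8*n*t \<le> \<bar>a*(m - 1) - ins*m\<bar>"
    and sep_G: "0.9*\<gamma>*n^2 \<le> \<bar>gAB - m^2/2\<bar>"
  shows "\<gamma>*t/2 \<le> \<bar>e*eG/N - e/2\<bar>
    \<or> \<gamma>*t/2 \<le> \<bar>ins*gin/(m*(m - 1)) + a*gAB/m^2 + (JB + JC)/2 - e/2\<bar>"
proof (rule ccontr)
  assume "\<not> ?thesis"
  then have upper: "\<bar>gAB - m^2/2\<bar> * \<bar>a*(m - 1) - ins*m\<bar> \<le> (21/80)*(n^3*(\<gamma>*t))"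
    unfolding abs_mult[symmetric] by (intro excess_product_upper_bound[OF n N F \<gamma>t G J]) auto
  have "(0.9*\<gamma>*n^2)*(0.8*n*t) \<le> \<bar>gAB - m^2/2\<bar> * \<bar>a*(m - 1) - ins*m\<bar>"
    using sep_F sep_G n \<gamma>t by (intro mult_mono) auto
  then have "(0.9*\<gamma>*n^2)*(0.8*n*t) \<le> (21/80)*(n^3*(\<gamma>*t))" using upper by (rule order_trans)
  moreover have "(0.9*\<gamma>*n^2)*(0.8*n*t) = (18/25)*(n^3*(\<gamma>*t))"
    by (simp add: power3_eq_cube power2_eq_square)
  moreover have "0 < n^3*(\<gamma>*t)" using n \<gamma>t by simp
  ultimately show False by linarith
qed

section \<open>Two bisected graphs\<close>

lemma exists_vertex_touching_few_edges:
  assumes "finite V" "V \<noteq> {}" "finite E" "\<And>e. e \<in> E \<Longrightarrow> card e = 2"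
  shows "\<exists>w\<in>V. e_touching E {w} * card V \<le> 2 * card E"
proof -
  define deg where "deg v = card {e \<in> E. v \<in> e}" for v
  have touching: "e_touching E {v} = deg v" for v
    unfolding e_touching_def deg_def by (rule arg_cong[where f = card]) auto
  have "(\<Sum>v\<in>V. deg v) = (\<Sum>e\<in>E. card {v \<in> V. v \<in> e})"
    unfolding deg_def using sum.swap_restrict[OF assms(1,3), of "\<lambda>_ _. 1" "\<lambda>v e. v \<in> e"]
    by (simp only: card_eq_sum)
  also have "\<dots> \<le> (\<Sum>e\<in>E. 2)"
  proof (rule sum_mono)
    fix e assume "e \<in> E"
    then have "finite e" "card e = 2" using assms(4) card.infinite by fastforce+
    then show "card {v \<in> V. v \<in> e} \<le> 2" by (metis (no_types, lifting) card_mono mem_Collect_eq subsetI)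
  qed
  finally have sum_deg: "(\<Sum>v\<in>V. deg v) \<le> 2 * card E" by simp
  have "Min (deg ` V) \<in> deg ` V" using assms(1,2) by simp
  then obtain w where "w \<in> V" "deg w = Min (deg ` V)" by (metis imageE)
  then have "deg w \<le> deg v" if "v \<in> V" for v using assms(1) that by simp
  then have "card V * deg w \<le> (\<Sum>v\<in>V. deg v)" using sum_bounded_below[of V "deg w" deg] by simp
  then have "e_touching E {w} * card V \<le> 2 * card E" using sum_deg by (simp add: touching mult.commute)
  then show ?thesis using \<open>w \<in> V\<close> by blast
qed

lemma exists_balanced_trim:
  assumes "finite V" "finite Y" "card V = card Y" "card Y = m \<or> card Y = m + 1"
    and "finite E" "\<And>e. e \<in> E \<Longrightarrow> card e = 2"
  obtains B R W where "B \<union> R = Y" "B \<inter> R = {}" "card B = m" "W \<subseteq> V" "card W = card R"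
    "card R \<le> 1" "e_touching E W * m \<le> 2 * card E"
proof (cases "card Y = m")
  case True
  then show ?thesis by (intro that[of Y "{}" "{}"]) (auto simp: e_touching_def)
next
  case False
  then have "card Y = m + 1" "card V = m + 1" using assms(3,4) by auto
  then obtain z where "z \<in> Y" by (metis card.empty ex_in_conv add_is_0 zero_neq_one)
  obtain w where "w \<in> V" "e_touching E {w} * card V \<le> 2 * card E"
    using exists_vertex_touching_few_edges[OF assms(1) _ assms(5,6)] \<open>card V = m + 1\<close> by fastforce
  moreover have "e_touching E {w} * m \<le> e_touching E {w} * card V"
    using \<open>card V = m + 1\<close> by simp
  ultimately have "e_touching E {w} * m \<le> 2 * card E" by linarith
  then show ?thesis using \<open>w \<in> V\<close> \<open>z \<in> Y\<close> \<open>card Y = m + 1\<close> assms(2)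
    by (intro that[of "Y - {z}" "{z}" "{w}"]) auto
qed

lemma exists_inj_on_onto_parts:
  assumes "finite U1" "finite U2" "finite U3" "finite Q1" "finite Q2" "finite Q3"
    and "U1 \<inter> U2 = {}" "U1 \<inter> U3 = {}" "U2 \<inter> U3 = {}"
    and "Q1 \<inter> Q2 = {}" "Q1 \<inter> Q3 = {}" "Q2 \<inter> Q3 = {}"
    and "card U1 = card Q1" "card U2 = card Q2" "card U3 = card Q3"
  obtains \<sigma> where "inj_on \<sigma> (U1 \<union> U2 \<union> U3)" "\<sigma> ` U1 = Q1" "\<sigma> ` U2 = Q2" "\<sigma> ` U3 = Q3"
proof -
  obtain h1 where "bij_betw h1 U1 Q1" using finite_same_card_bij assms(1,4,13) by blast
  obtain h2 where "bij_betw h2 U2 Q2" using finite_same_card_bij assms(2,5,14) by blast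
  obtain h3 where "bij_betw h3 U3 Q3" using finite_same_card_bij assms(3,6,15) by blast
  define \<sigma> where "\<sigma> x = (if x \<in> U1 then h1 x else if x \<in> U2 then h2 x else h3 x)" for x
  have "bij_betw \<sigma> U1 Q1"
    by (intro bij_betw_cong[THEN iffD1, OF _ \<open>bij_betw h1 U1 Q1\<close>]) (simp add: \<sigma>_def)
  moreover have "bij_betw \<sigma> U2 Q2"
    using assms(7) by (intro bij_betw_cong[THEN iffD1, OF _ \<open>bij_betw h2 U2 Q2\<close>]) (auto simp: \<sigma>_def)
  moreover have "bij_betw \<sigma> U3 Q3"
    using assms(8,9) by (intro bij_betw_cong[THEN iffD1, OF _ \<open>bij_betw h3 U3 Q3\<close>]) (auto simp: \<sigma>_def)
  ultimately have "bij_betw \<sigma> (U1 \<union> U2 \<union> U3) (Q1 \<union> Q2 \<union> Q3)"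
    using assms(10-12) by (intro bij_betw_combine) auto
  then show ?thesis
    using \<open>bij_betw \<sigma> U1 Q1\<close> \<open>bij_betw \<sigma> U2 Q2\<close> \<open>bij_betw \<sigma> U3 Q3\<close>
    by (intro that[of \<sigma>]) (auto simp: bij_betw_def)
qed


locale bisected_graphs =
  fixes n :: nat and VF :: "nat set" and EF :: "nat set set" and U V :: "nat set"
    and EG :: "nat set set" and X Y :: "nat set"
  assumes n_ge: "1000 \<le> n"
    and F: "graph_on VF EF" "card VF = n" "U \<union> V = VF" "U \<inter> V = {}" "card U = n div 2"
    and G: "graph_on {0..<n} EG" "X \<union> Y = {0..<n}" "X \<inter> Y = {}" "card X = n div 2"
begin

lemma finite_parts: "finite VF" "finite U" "finite V" "finite X" "finite Y" "finite EF" "finite EG"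
  using F G graph_on_finite_edges unfolding graph_on_def by (auto intro: finite_subset)

lemma card_V: "card V = n - n div 2" and card_Y: "card Y = n - n div 2"
  using card_Un_disjoint[of U V] card_Un_disjoint[of X Y] finite_parts F G by auto

lemma real_n_parity: "real n = 2 * real (n div 2) \<or> real n = 2 * real (n div 2) + 1"
proof -
  have "n = 2 * (n div 2) \<or> n = 2 * (n div 2) + 1" by presburger
  then show ?thesis
  proof
    assume "n = 2 * (n div 2)"
    then have "real n = real (2 * (n div 2))" by (rule arg_cong)
    then show ?thesis by simp
  next
    assume "n = 2 * (n div 2) + 1"
    then have "real n = real (2 * (n div 2) + 1)" by (rule arg_cong)
    then show ?thesis by simp
  qed
qed

lemma exists_trimmed_embeddings:
  obtains B R W \<sigma>0 \<sigma>1 where "B \<union> R = Y" "B \<inter> R = {}" "card B = n div 2" "card R \<le> 1" "W \<subseteq> V"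
    "e_touching EF W * (n div 2) \<le> 2 * card EF"
    "inj_on \<sigma>0 VF" "\<sigma>0 ` VF = {0..<n}" "\<sigma>0 ` U = X" "\<sigma>0 ` (V - W) = B"
    "inj_on \<sigma>1 VF" "\<sigma>1 ` VF = {0..<n}" "\<sigma>1 ` U = B" "\<sigma>1 ` (V - W) = X"
proof -
  let ?m = "n div 2"
  have "card Y = ?m \<or> card Y = ?m + 1" "card V = card Y" using card_Y card_V by presburger+
  then obtain B R W where BRW: "B \<union> R = Y" "B \<inter> R = {}" "card B = ?m" "W \<subseteq> V" "card W = card R"
    "card R \<le> 1" "e_touching EF W * ?m \<le> 2 * card EF"
    using exists_balanced_trim[of V Y ?m EF] finite_parts F(1) unfolding graph_on_def by blast
  have fin: "finite B" "finite R" "finite W" "finite (V - W)"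
    using BRW(1,4) finite_parts by (auto intro: finite_subset)
  have "card (V - W) = ?m"
    using card_Un_disjoint[OF fin(1,2) BRW(2)] card_Diff_subset[OF fin(3) BRW(4)] BRW card_V card_Y
    by simp
  have VF: "VF = U \<union> (V - W) \<union> W" "U \<inter> (V - W) = {}" "U \<inter> W = {}" "(V - W) \<inter> W = {}"
    using F(3,4) BRW(4) by auto
  have S: "{0..<n} = X \<union> B \<union> R" "X \<inter> B = {}" "X \<inter> R = {}" "B \<inter> R = {}"
    using G(2,3) BRW(1,2) by auto
  obtain \<sigma>0 where "inj_on \<sigma>0 (U \<union> (V - W) \<union> W)" "\<sigma>0 ` U = X" "\<sigma>0 ` (V - W) = B" "\<sigma>0 ` W = R"
    by (rule exists_inj_on_onto_parts[of U "V - W" W X B R])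
      (use finite_parts fin VF S BRW F(5) G(4) \<open>card (V - W) = ?m\<close> in auto)
  moreover obtain \<sigma>1 where "inj_on \<sigma>1 (U \<union> (V - W) \<union> W)" "\<sigma>1 ` U = B" "\<sigma>1 ` (V - W) = X" "\<sigma>1 ` W = R"
    by (rule exists_inj_on_onto_parts[of U "V - W" W B X R])
      (use finite_parts fin VF S BRW F(5) G(4) \<open>card (V - W) = ?m\<close> in auto)
  ultimately show ?thesis using BRW VF(1) S(1) by (intro that[of B R W \<sigma>0 \<sigma>1]) (auto simp: image_Un)
qed

lemma card_EF_split:
  assumes "W \<subseteq> V"
  shows "card EF = e_within EF U + e_within EF (V - W) + e_cross EF U (V - W) + e_touching EF W"
  by (rule card_split_edges[OF finite_parts(6)]) (use F(1,3,4) assms in \<open>auto simp: graph_on_def\<close>)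

lemma card_EG_split:
  assumes "B \<union> R = Y" "B \<inter> R = {}"
  shows "card EG = e_within EG X + e_within EG B + e_cross EG X B + e_touching EG R"
  by (rule card_split_edges[OF finite_parts(7)]) (use G assms in \<open>auto simp: graph_on_def\<close>)

lemma deviation_parameter_bounds:
  fixes t \<gamma> :: real
  assumes "1 \<le> t" "0 < \<gamma>" "t \<le> \<bar>real (e_cross EF U V) - real (card EF) / 2\<bar>"
    and "\<gamma> * real n ^ 2 \<le> \<bar>real (e_cross EG X Y) - real (card X) * real (card Y) / 2\<bar>"
    and "10 * real (card EF) / real n \<le> \<gamma> * t"
  shows "\<gamma> \<le> 1/8" "20 \<le> \<gamma> * n" "card EF \<le> \<gamma> * t * n / 10" "card EF \<le> n * t / 80"
proof -
  have "n > 0" using n_ge by simp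
  have "e_cross EF U V \<le> card EF" unfolding e_cross_def using finite_parts(6) by (intro card_mono) auto
  then have "t \<le> card EF / 2" using assms(3) by (simp add: abs_if split: if_splits)
  have "real (e_cross EG X Y) \<le> real (card X) * real (card Y)"
    using e_cross_le[OF finite_parts(4,5), of EG] by (simp only: of_nat_mult[symmetric] of_nat_le_iff)
  then have "\<gamma> * real n ^ 2 \<le> real (card X) * real (card Y) / 2" using assms(4) by (simp add: abs_le_iff)
  moreover have "real (card X) * real (card Y) \<le> real n ^ 2 / 4"
  proof -
    have "card X + card Y = n" using card_Un_disjoint[of X Y] finite_parts G(2,3) by simp
    then have "real (card X) + real (card Y) = real n" by (metis of_nat_add)
    moreover have "4 * (real (card X) * real (card Y)) \<le> (real (card X) + real (card Y))^2"
      using sum_squares_ge_zero[of "real (card X) - real (card Y)" 0] by (simp add: power2_eq_square algebra_simps)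
    ultimately show ?thesis by simp
  qed
  ultimately have "\<gamma> * real n ^ 2 \<le> real n ^ 2 / 8" by simp
  then show "\<gamma> \<le> 1/8" using \<open>n > 0\<close> by simp
  have "card EF \<le> \<gamma> * t * n / 10" using assms(5) \<open>n > 0\<close> by (simp add: field_simps)
  then show "card EF \<le> \<gamma> * t * n / 10" .
  moreover have "\<gamma> * t * n \<le> (1/8) * t * n"
    using \<open>\<gamma> \<le> 1/8\<close> assms(1) by (intro mult_right_mono) auto
  ultimately show "card EF \<le> n * t / 80" by (simp add: ac_simps)
  have "\<gamma> * t * n = (\<gamma> * n) * t" by (simp add: ac_simps)
  then have "20 * t \<le> (\<gamma> * n) * t" using \<open>t \<le> card EF / 2\<close> \<open>card EF \<le> \<gamma> * t * n / 10\<close> by linarith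
  then show "20 \<le> \<gamma> * n" using assms(1) by simp
qed

lemma F_trimmed_cross_excess:
  fixes t :: real
  assumes "W \<subseteq> V" "e_touching EF W * (n div 2) \<le> 2 * card EF" "1 \<le> t"
    and "t \<le> \<bar>real (e_cross EF U V) - real (card EF) / 2\<bar>" "card EF \<le> n * t / 80"
  shows "0.8 * n * t \<le> \<bar>real (e_cross EF U (V - W)) * (real (n div 2) - 1)
    - (real (e_within EF U) + real (e_within EF (V - W))) * real (n div 2)\<bar>"
proof (rule trimmed_cross_excess_lower_bound)
  have "V = (V - W) \<union> W" using assms(1) by auto
  then have "e_cross EF U (V - W) \<le> e_cross EF U V" "e_cross EF U V \<le> e_cross EF U (V - W) + e_touching EF W"
    using e_cross_le_e_cross_Un[OF finite_parts(6), of U "V - W" W]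
      e_cross_Un_le[OF finite_parts(6), of U "V - W" W] by simp_all
  then show "t - real (e_touching EF W) \<le> \<bar>real (e_cross EF U (V - W)) - real (card EF) / 2\<bar>"
    using assms(4) by linarith
  show "real (card EF) = real (e_within EF U) + real (e_within EF (V - W)) + real (e_cross EF U (V - W))
      + real (e_touching EF W)"
    using card_EF_split[OF assms(1)] by simp
  show "real (e_touching EF W) * real (n div 2) \<le> 2 * real (card EF)"
    using assms(2) by (metis of_nat_le_iff of_nat_mult of_nat_numeral)
qed (use n_ge assms(3,5) in auto)

lemma e_touching_EG_le: "card R \<le> 1 \<Longrightarrow> R \<subseteq> {0..<n} \<Longrightarrow> e_touching EG R \<le> n"
  using e_touching_le[OF G(1), of R] by (simp add: order_trans)

lemma G_trimmed_cross_excess: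
  fixes \<gamma> :: real
  assumes "B \<union> R = Y" "B \<inter> R = {}" "card R \<le> 1" "20 \<le> \<gamma> * n"
    and "\<gamma> * real n ^ 2 \<le> \<bar>real (e_cross EG X Y) - real (card X) * real (card Y) / 2\<bar>"
  shows "0.9 * \<gamma> * real n ^ 2 \<le> \<bar>real (e_cross EG X B) - real (n div 2)^2 / 2\<bar>"
proof (rule trimmed_density_excess_lower_bound)
  have "e_touching EG R \<le> n" using e_touching_EG_le assms(1,3) G(2) by blast
  then show "real (e_cross EG X Y) \<le> real (e_cross EG X B) + real n"
    using e_cross_Un_le[OF finite_parts(7), of X B R] assms(1) by simp
  show "real (e_cross EG X B) \<le> real (e_cross EG X Y)"
    using e_cross_le_e_cross_Un[OF finite_parts(7), of X B R] assms(1) by simp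
  have "real (card Y) = real n - real (n div 2)" using card_Y by simp
  then show "\<gamma> * real n ^ 2 \<le> \<bar>real (e_cross EG X Y) - real (n div 2) * (real n - real (n div 2)) / 2\<bar>"
    using assms(5) G(4) by simp
qed (use assms(4) real_n_parity in auto)

lemma two_block_means:
  assumes "B \<union> R = Y" "B \<inter> R = {}" "card B = n div 2" "W \<subseteq> V"
    and \<sigma>0: "inj_on \<sigma>0 VF" "\<sigma>0 ` U = X" "\<sigma>0 ` (V - W) = B"
    and \<sigma>1: "inj_on \<sigma>1 VF" "\<sigma>1 ` U = B" "\<sigma>1 ` (V - W) = X"
  obtains JB JC where "0 \<le> JB" "JB \<le> real (e_touching EF W)" "0 \<le> JC" "JC \<le> real (e_touching EF W)"
    "(mean_overlap {0..<n} X B \<sigma>0 EF EG + mean_overlap {0..<n} B X \<sigma>1 EF EG) / 2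
      = (real (e_within EF U) + real (e_within EF (V - W)))
          * (real (e_within EG X) + real (e_within EG B)) / (real (n div 2) * (real (n div 2) - 1))
        + real (e_cross EF U (V - W)) * real (e_cross EG X B) / real (n div 2)^2 + (JB + JC) / 2"
proof -
  let ?m = "real (n div 2)"
  have VF: "VF = U \<union> (V - W) \<union> W" "U \<inter> (V - W) = {}" "U \<inter> W = {}" "(V - W) \<inter> W = {}"
    using F(3,4) assms(4) by auto
  have XB: "X \<subseteq> {0..<n}" "B \<subseteq> {0..<n}" "X \<inter> B = {}" "B \<inter> X = {}"
    using G(2,3) assms(1) by auto
  obtain JB where JB: "0 \<le> JB" "JB \<le> real (e_touching EF W)" and mean_XB: "mean_overlap {0..<n} X B \<sigma>0 EF EG
      = real (e_within EF U) * real (e_within EG X) / real (card (pairs_in X))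
      + real (e_within EF (V - W)) * real (e_within EG B) / real (card (pairs_in B))
      + real (e_cross EF U (V - W)) * real (e_cross EG X B) / (real (card X) * real (card B)) + JB"
    by (rule mean_overlap_block_perms[OF finite_atLeastLessThan XB(1-3) G(1) F(1) VF \<sigma>0])
  obtain JC where JC: "0 \<le> JC" "JC \<le> real (e_touching EF W)" and mean_BX: "mean_overlap {0..<n} B X \<sigma>1 EF EG
      = real (e_within EF U) * real (e_within EG B) / real (card (pairs_in B))
      + real (e_within EF (V - W)) * real (e_within EG X) / real (card (pairs_in X))
      + real (e_cross EF U (V - W)) * real (e_cross EG B X) / (real (card B) * real (card X)) + JC"
    by (rule mean_overlap_block_perms[OF finite_atLeastLessThan XB(2,1,4) G(1) F(1) VF \<sigma>1])
  have pairs: "real (card (pairs_in X)) = ?m * (?m - 1) / 2" "real (card (pairs_in B)) = ?m * (?m - 1) / 2"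
    using real_card_pairs_in[OF finite_parts(4)] real_card_pairs_in[OF finite_subset[OF XB(2)]]
      G(4) assms(3) by simp_all
  have avg: "(x1 / (K / 2) + x2 / (K / 2) + y + J1 + (x3 / (K / 2) + x4 / (K / 2) + y + J2)) / 2
      = (x1 + x2 + x3 + x4) / K + y + (J1 + J2) / 2" for x1 x2 x3 x4 y J1 J2 K :: real
    by (simp add: field_simps) (simp add: add_divide_distrib)
  have "(mean_overlap {0..<n} X B \<sigma>0 EF EG + mean_overlap {0..<n} B X \<sigma>1 EF EG) / 2
      = (real (e_within EF U) * real (e_within EG X) + real (e_within EF (V - W)) * real (e_within EG B)
        + real (e_within EF U) * real (e_within EG B) + real (e_within EF (V - W)) * real (e_within EG X))
        / (?m * (?m - 1))
      + real (e_cross EF U (V - W)) * real (e_cross EG X B) / (?m * ?m) + (JB + JC) / 2"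
    unfolding mean_XB mean_BX pairs e_cross_commute[of EG B X] G(4) assms(3) by (rule avg)
  also have "\<dots> = (real (e_within EF U) + real (e_within EF (V - W)))
        * (real (e_within EG X) + real (e_within EG B)) / (?m * (?m - 1))
      + real (e_cross EF U (V - W)) * real (e_cross EG X B) / ?m^2 + (JB + JC) / 2"
    by (simp add: algebra_simps power2_eq_square)
  finally show ?thesis by (rule that[OF JB JC])
qed

lemma some_mean_deviates:
  fixes t \<gamma> :: real
  assumes t: "1 \<le> t" and \<gamma>: "0 < \<gamma>"
    and F_dev: "t \<le> \<bar>real (e_cross EF U V) - real (card EF) / 2\<bar>"
    and G_dev: "\<gamma> * real n ^ 2 \<le> \<bar>real (e_cross EG X Y) - real (card X) * real (card Y) / 2\<bar>"
    and sparse: "10 * real (card EF) / real n \<le> \<gamma> * t"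
    and BR: "B \<union> R = Y" "B \<inter> R = {}" "card B = n div 2" "card R \<le> 1"
    and W: "W \<subseteq> V" "e_touching EF W * (n div 2) \<le> 2 * card EF"
    and \<sigma>0: "inj_on \<sigma>0 VF" "\<sigma>0 ` VF = {0..<n}" "\<sigma>0 ` U = X" "\<sigma>0 ` (V - W) = B"
    and \<sigma>1: "inj_on \<sigma>1 VF" "\<sigma>1 ` U = B" "\<sigma>1 ` (V - W) = X"
  shows "\<gamma> * t / 2 \<le> \<bar>mean_overlap {0..<n} {0..<n} {} \<sigma>0 EF EG - real (card EF) / 2\<bar>
    \<or> \<gamma> * t / 2 \<le> \<bar>mean_overlap {0..<n} X B \<sigma>0 EF EG - real (card EF) / 2\<bar>
    \<or> \<gamma> * t / 2 \<le> \<bar>mean_overlap {0..<n} B X \<sigma>1 EF EG - real (card EF) / 2\<bar>"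
proof -
  obtain JB JC where J: "0 \<le> JB" "JB \<le> real (e_touching EF W)" "0 \<le> JC" "JC \<le> real (e_touching EF W)"
    and mean_blocks: "(mean_overlap {0..<n} X B \<sigma>0 EF EG + mean_overlap {0..<n} B X \<sigma>1 EF EG) / 2
      = (real (e_within EF U) + real (e_within EF (V - W)))
          * (real (e_within EG X) + real (e_within EG B)) / (real (n div 2) * (real (n div 2) - 1))
        + real (e_cross EF U (V - W)) * real (e_cross EG X B) / real (n div 2)^2 + (JB + JC) / 2"
    by (rule two_block_means[OF BR(1-3) W(1) \<sigma>0(1,3,4) \<sigma>1])
  have mean_all: "mean_overlap {0..<n} {0..<n} {} \<sigma>0 EF EG
      = real (card EF) * real (card EG) / (real n * (real n - 1) / 2)"
    using mean_overlap_all_perms[OF finite_atLeastLessThan G(1) F(1) \<sigma>0(1,2)]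
      real_card_pairs_in[of "{0..<n}"] by simp
  note bounds = deviation_parameter_bounds[OF t \<gamma> F_dev G_dev sparse]
  have "R \<subseteq> {0..<n}" using BR(1) G(2) by auto
  have "\<gamma> * t / 2 \<le> \<bar>mean_overlap {0..<n} {0..<n} {} \<sigma>0 EF EG - real (card EF) / 2\<bar>
    \<or> \<gamma> * t / 2 \<le> \<bar>(mean_overlap {0..<n} X B \<sigma>0 EF EG + mean_overlap {0..<n} B X \<sigma>1 EF EG) / 2
        - real (card EF) / 2\<bar>"
    unfolding mean_all mean_blocks
  proof (rule full_or_block_mean_deviates)
    show "real (card EF) = real (e_within EF U) + real (e_within EF (V - W))
        + real (e_cross EF U (V - W)) + real (e_touching EF W)"
      using card_EF_split[OF W(1)] by simp
    show "real (card EG) = real (e_within EG X) + real (e_within EG B) + real (e_cross EG X B)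
        + real (e_touching EG R)"
      using card_EG_split[OF BR(1,2)] by simp
    show "real (e_touching EF W) * real (n div 2) \<le> 2 * real (card EF)"
      using W(2) by (metis of_nat_le_iff of_nat_mult of_nat_numeral)
    show "real (e_touching EG R) \<le> real n" using e_touching_EG_le[OF BR(4) \<open>R \<subseteq> {0..<n}\<close>] by simp
    show "0.8 * real n * t \<le> \<bar>real (e_cross EF U (V - W)) * (real (n div 2) - 1)
        - (real (e_within EF U) + real (e_within EF (V - W))) * real (n div 2)\<bar>"
      using F_trimmed_cross_excess[OF W t F_dev bounds(4)] .
    show "0.9 * \<gamma> * real n ^ 2 \<le> \<bar>real (e_cross EG X B) - real (n div 2)^2 / 2\<bar>"
      using G_trimmed_cross_excess[OF BR(1,2,4) bounds(2) G_dev] .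
  qed (use n_ge real_n_parity t \<gamma> bounds(3) J in auto)
  then show ?thesis by argo
qed

lemma exists_deviating_copy:
  fixes t \<gamma> :: real
  assumes "1 \<le> t" "0 < \<gamma>"
    and "t \<le> \<bar>real (e_cross EF U V) - real (card EF) / 2\<bar>"
    and "\<gamma> * real n ^ 2 \<le> \<bar>real (e_cross EG X Y) - real (card X) * real (card Y) / 2\<bar>"
    and "10 * real (card EF) / real n \<le> \<gamma> * t"
  shows "\<exists>F0. is_copy_in_Kn n VF EF F0 \<and> \<gamma> * t / 2 \<le> \<bar>real (card (F0 \<inter> EG)) - real (card EF) / 2\<bar>"
proof -
  obtain B R W \<sigma>0 \<sigma>1 where BR: "B \<union> R = Y" "B \<inter> R = {}" "card B = n div 2" "card R \<le> 1"
    and W: "W \<subseteq> V" "e_touching EF W * (n div 2) \<le> 2 * card EF"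
    and \<sigma>0: "inj_on \<sigma>0 VF" "\<sigma>0 ` VF = {0..<n}" "\<sigma>0 ` U = X" "\<sigma>0 ` (V - W) = B"
    and \<sigma>1: "inj_on \<sigma>1 VF" "\<sigma>1 ` VF = {0..<n}" "\<sigma>1 ` U = B" "\<sigma>1 ` (V - W) = X"
    by (rule exists_trimmed_embeddings)
  from some_mean_deviates[OF assms BR W \<sigma>0 \<sigma>1(1,3,4)] show ?thesis
    using exists_copy_of_mean_deviation \<sigma>0(1,2) \<sigma>1(1,2) by blast
qed

end

theorem lemma2p1:
  shows "\<exists>n0::nat. \<forall>n\<ge>n0.
    \<forall>(VF::nat set) (EF::nat set set) (t::real) U V (\<gamma>::real) (EG::nat set set) X Y.
      graph_on VF EF \<and> card VF = n \<and> t \<ge> 1 \<and>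
      U \<union> V = VF \<and> U \<inter> V = {} \<and> card U = n div 2 \<and>
      \<bar>real (e_cross EF U V) - real (card EF) / 2\<bar> \<ge> t \<and>
      0 < \<gamma> \<and> \<gamma> < 1 \<and>
      graph_on {0..<n} EG \<and>
      X \<union> Y = {0..<n} \<and> X \<inter> Y = {} \<and> card X = n div 2 \<and>
      \<bar>real (e_cross EG X Y) - real (card X) * real (card Y) / 2\<bar> \<ge> \<gamma> * real n ^ 2 \<and>
      \<gamma> * t \<ge> 10 * real (card EF) / real n
      \<longrightarrow> (\<exists>F0. is_copy_in_Kn n VF EF F0 \<and>
             \<bar>real (card (F0 \<inter> EG)) - real (card EF) / 2\<bar> \<ge> \<gamma> * t / 2)"
  by (intro exI[of _ "1000::nat"] allI impI, elim conjE, rule bisected_graphs.exists_deviating_copy)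
    (auto simp: bisected_graphs_def)

end
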